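(* Let $\sigma>0$, $A>0$, and let $f:\mathbb{R}\to\mathbb{R}$ be continuous, bandlimited to $\sigma$ rad/s, with $|f(t)|\le A/(1+t^2)$ for all $t$. Let $\alpha>A\sigma$, $g(t)=\alpha t+f(t)$ and $h(u)=g^{-1}(u)-u/\alpha$. Then for every $1\le p<\infty$, $$\|h\|_p=\frac{1}{\alpha^{1-\frac1p}}\|f\|_p .$$
   Context: Fourier transform convention: $\hat f(\xi)=\int_{\mathbb{R}}f(t)e^{-i2\pi\xi t}\,dt$; $f$ is bandlimited to $\sigma$ rad/s if $\hat f(\xi)=0$ for $|\xi|>\sigma/(2\pi)$. $\|\cdot\|_p$ denotes the $L^p(\mathbb{R})$ norm. *)

theory Defs
  imports "HOL-Analysis.Analysis"
begin

definition fourier_transform :: "(real \<Rightarrow> real) \<Rightarrow> real \<Rightarrow> complex" where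
  "fourier_transform f \<xi> =
     (\<integral> t. complex_of_real (f t) * cis (- 2 * pi * \<xi> * t) \<partial>lborel)"

text \<open>f is bandlimited to sigma rad/s: hat f vanishes for |xi| > sigma/(2 pi).\<close>
definition bandlimited :: "real \<Rightarrow> (real \<Rightarrow> real) \<Rightarrow> bool" where
  "bandlimited \<sigma> f \<longleftrightarrow> (\<forall>\<xi>. \<bar>\<xi>\<bar> > \<sigma> / (2 * pi) \<longrightarrow> fourier_transform f \<xi> = 0)"

text \<open>L^p norm (for functions with integrable p-th power).\<close>
definition Lp_norm :: "real \<Rightarrow> (real \<Rightarrow> real) \<Rightarrow> real" where
  "Lp_norm p f = (\<integral> t. \<bar>f t\<bar> powr p \<partial>lborel) powr (1 / p)"

end

theory Submission
  imports Defs "HOL-Probability.Probability"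
begin

text \<open>Bernstein's inequality gives \<open>\<bar>f'\<bar> \<le> \<sigma> * A < \<alpha>\<close>, so \<open>g\<close> is an increasing
  \<open>C\<^sup>1\<close> bijection with \<open>g' = \<alpha> + f' > 0\<close>. Since \<open>h (g t) = - f t / \<alpha>\<close>, the substitution
  \<open>u = g t\<close> turns \<open>\<integral>\<bar>h\<bar>\<^sup>p\<close> into \<open>\<alpha>\<^sup>-\<^sup>p * \<integral>\<bar>f\<bar>\<^sup>p * (\<alpha> + f')\<close>, and the term with \<open>f'\<close> integrates
  to zero because \<open>\<bar>f\<bar>\<^sup>p * f'\<close> is the derivative of \<open>sgn f * \<bar>f\<bar>\<^sup>p\<^sup>+\<^sup>1 / (p + 1)\<close>, which
  vanishes at infinity.

  Bernstein's inequality itself follows from Fourier inversion (proved by Gaussian summability)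
  and M. Riesz's interpolation formula: on the support of \<open>fourier_transform f\<close> the multiplier
  \<open>2 * pi * \<xi>\<close> of differentiation coincides with a triangle wave, whose Fourier series expresses
  \<open>f' t\<close> as a combination of differences \<open>f (t + \<tau>\<^sub>j) - f (t - \<tau>\<^sub>j)\<close> with coefficients of
  absolute sum \<open>\<sigma> / 2\<close>.\<close>

section \<open>The triangle wave\<close>

lemma odd_inverse_squares_sums: "(\<lambda>k. 1 / (2 * real k + 1)\<^sup>2) sums (pi\<^sup>2 / 8)"
proof -
  have squares: "(\<lambda>n. 1 / (real n + 1)\<^sup>2) sums (pi\<^sup>2 / 6)"
    using inverse_squares_sums by (simp add: add.commute)
  have "(\<lambda>k. \<Sum>n\<in>{k * 2..<k * 2 + 2}. 1 / (real n + 1)\<^sup>2) sums (pi\<^sup>2 / 6)"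
    using sums_group[OF squares, of 2] by simp
  moreover have "(\<Sum>n\<in>{k * 2..<k * 2 + 2}. 1 / (real n + 1)\<^sup>2)
      = 1 / (2 * real k + 1)\<^sup>2 + 1/4 * (1 / (real k + 1)\<^sup>2)" for k
    by (simp add: numeral_2_eq_2 field_simps power2_eq_square)
  ultimately have "(\<lambda>k. 1 / (2 * real k + 1)\<^sup>2 + 1/4 * (1 / (real k + 1)\<^sup>2)) sums (pi\<^sup>2 / 6)"
    by simp
  from sums_diff[OF this sums_mult[OF squares, of "1/4"]] show ?thesis by simp
qed

lemma sum_odd_inverse_squares_le: "(\<Sum>k<n. 1 / (2 * real k + 1)\<^sup>2) \<le> pi\<^sup>2 / 8"
  using sum_le_suminf[OF sums_summable[OF odd_inverse_squares_sums], of "{..<n}"]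
    sums_unique[OF odd_inverse_squares_sums] by simp

definition odd_sin_sum :: "nat \<Rightarrow> real \<Rightarrow> real" where
  "odd_sin_sum n x = (\<Sum>k<n. (-1)^k * sin ((2 * real k + 1) * x))"

definition odd_cos_sum :: "nat \<Rightarrow> real \<Rightarrow> real" where
  "odd_cos_sum n x = (\<Sum>k<n. (-1)^k * cos ((2 * real k + 1) * x) / (2 * real k + 1))"

definition triangle_sum :: "nat \<Rightarrow> real \<Rightarrow> real" where
  "triangle_sum n x = (\<Sum>k<n. (-1)^k * sin ((2 * real k + 1) * x) / (2 * real k + 1)^2)"

lemma odd_sin_sum_closed_form: "2 * cos x * odd_sin_sum n x = - ((-1)^n * sin (2 * real n * x))"
proof (induction n)
  case 0
  then show ?case by (simp add: odd_sin_sum_def)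
next
  case (Suc n)
  have "sin ((2 * real n + 1) * x + x) + sin ((2 * real n + 1) * x - x)
      = 2 * cos x * sin ((2 * real n + 1) * x)"
    by (simp add: sin_add sin_diff)
  then have step: "2 * cos x * sin ((2 * real n + 1) * x) = sin ((2 * real n + 2) * x) + sin (2 * real n * x)"
    by (simp add: algebra_simps)
  have "2 * cos x * odd_sin_sum (Suc n) x
      = 2 * cos x * odd_sin_sum n x + (-1)^n * (2 * cos x * sin ((2 * real n + 1) * x))"
    by (simp add: odd_sin_sum_def algebra_simps)
  also have "\<dots> = - ((-1)^(Suc n) * sin (2 * real (Suc n) * x))"
    unfolding Suc.IH step by (simp add: algebra_simps)
  finally show ?case .
qed

lemma has_real_derivative_odd_cos_sum: "(odd_cos_sum n has_real_derivative - odd_sin_sum n x) (at x)"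
proof -
  have "((\<lambda>x. \<Sum>k<n. (-1)^k / (2 * real k + 1) * cos ((2 * real k + 1) * x)) has_real_derivative
      (\<Sum>k<n. (-1)^k / (2 * real k + 1) * (- sin ((2 * real k + 1) * x) * (2 * real k + 1)))) (at x)"
    by (intro DERIV_sum DERIV_cmult) (auto intro!: derivative_eq_intros)
  moreover have "(\<Sum>k<n. (-1)^k / (2 * real k + 1) * (- sin ((2 * real k + 1) * x) * (2 * real k + 1)))
      = - odd_sin_sum n x"
    unfolding odd_sin_sum_def sum_negf[symmetric] by (intro sum.cong) (auto simp: field_simps)
  moreover have "odd_cos_sum n = (\<lambda>x. \<Sum>k<n. (-1)^k / (2 * real k + 1) * cos ((2 * real k + 1) * x))"
    unfolding odd_cos_sum_def by (auto intro!: ext sum.cong)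
  ultimately show ?thesis by simp
qed

lemma has_real_derivative_odd_cos_sum_closed_form:
  assumes "cos x \<noteq> 0"
  shows "(odd_cos_sum n has_real_derivative (-1)^n * sin (2 * real n * x) / (2 * cos x)) (at x)"
proof -
  have "- odd_sin_sum n x = (-1)^n * sin (2 * real n * x) / (2 * cos x)"
    using odd_sin_sum_closed_form[of x n] assms by (simp add: field_simps)
  then show ?thesis using has_real_derivative_odd_cos_sum[of n x] by simp
qed

lemma has_real_derivative_triangle_sum: "(triangle_sum n has_real_derivative odd_cos_sum n x) (at x)"
proof -
  have "((\<lambda>x. \<Sum>k<n. (-1)^k / (2 * real k + 1)^2 * sin ((2 * real k + 1) * x)) has_real_derivative
      (\<Sum>k<n. (-1)^k / (2 * real k + 1)^2 * (cos ((2 * real k + 1) * x) * (2 * real k + 1)))) (at x)"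
    by (intro DERIV_sum DERIV_cmult) (auto intro!: derivative_eq_intros)
  moreover have "(\<Sum>k<n. (-1)^k / (2 * real k + 1)^2 * (cos ((2 * real k + 1) * x) * (2 * real k + 1)))
      = odd_cos_sum n x"
  proof -
    have "2 * real k + 1 \<noteq> 0" for k by linarith
    then show ?thesis
      unfolding odd_cos_sum_def by (intro sum.cong refl) (simp add: power2_eq_square)
  qed
  moreover have "triangle_sum n = (\<lambda>x. \<Sum>k<n. (-1)^k / (2 * real k + 1)^2 * sin ((2 * real k + 1) * x))"
    unfolding triangle_sum_def by (auto intro!: ext sum.cong)
  ultimately show ?thesis by simp
qed

lemma cos_le_cos_of_abs_le:
  assumes "\<bar>x\<bar> < pi/2" "\<bar>y\<bar> \<le> \<bar>x\<bar>"
  shows "cos x \<le> cos y"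
  using cos_monotone_0_pi_le[of "\<bar>y\<bar>" "\<bar>x\<bar>"] assms by (simp add: cos_abs_real)

lemma cos_pos_of_abs_less: "\<bar>x\<bar> < pi/2 \<Longrightarrow> 0 < cos x"
  using cos_gt_zero_pi[of "\<bar>x\<bar>"] by (simp add: cos_abs_real)

lemma mean_value_bound_centered:
  fixes F F' :: "real \<Rightarrow> real"
  assumes "\<And>t. \<bar>t\<bar> \<le> r \<Longrightarrow> (F has_real_derivative F' t) (at t)"
    and "\<And>t. \<bar>t\<bar> \<le> r \<Longrightarrow> \<bar>F' t\<bar> \<le> B" and "\<bar>y\<bar> \<le> r"
  shows "\<bar>F y - F 0\<bar> \<le> B * \<bar>y\<bar>"
proof -
  have D: "(F has_field_derivative F' z) (at z within {-r..r})" if "z \<in> {-r..r}" for z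
    using assms(1)[of z] that by (simp add: abs_le_iff has_field_derivative_at_within)
  have N: "norm (F' z) \<le> B" if "z \<in> {-r..r}" for z
    using assms(2)[of z] that by (simp add: abs_le_iff)
  have "y \<in> {-r..r}" "0 \<in> {-r..r}"
    using assms(3) by auto
  from field_differentiable_bound[OF convex_real_interval(5) D N this] show ?thesis
    by simp
qed

lemma odd_cos_sum_deviation_le:
  assumes x: "\<bar>x\<bar> < pi/2" and y: "\<bar>y\<bar> \<le> \<bar>x\<bar>" and n: "n \<ge> 1"
  shows "\<bar>odd_cos_sum n y - odd_cos_sum n 0\<bar> \<le> (1 / cos x + \<bar>x\<bar> / (cos x)^2) / real n"
proof -
  have cx: "0 < cos x" using cos_pos_of_abs_less[OF x] .
  have np: "real n > 0" using n by simp
  have cos_ge: "cos x \<le> cos t" if "\<bar>t\<bar> \<le> \<bar>x\<bar>" for t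
    using cos_le_cos_of_abs_le[OF x that] .
  have ct: "cos t > 0" if "\<bar>t\<bar> \<le> \<bar>x\<bar>" for t
    using cos_ge[OF that] cx by linarith
  txt \<open>Integration by parts: \<open>W\<close> has the same oscillating derivative as \<open>odd_cos_sum n\<close>
    up to the error \<open>G'\<close>, and both \<open>W\<close> and \<open>G'\<close> are \<open>O(1/n)\<close>.\<close>
  define W where "W t = - ((-1)^n * cos (2 * real n * t)) / (4 * real n * cos t)" for t
  define G' where "G' t = (-1)^n * cos (2 * real n * t) * sin t / (4 * real n * (cos t)^2)" for t
  have derW: "(W has_real_derivative ((-1)^n * sin (2 * real n * t) / (2 * cos t) - G' t)) (at t)"
    if "\<bar>t\<bar> \<le> \<bar>x\<bar>" for t
  proof -
    have c: "cos t \<noteq> 0" using ct[OF that] by simp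
    have "(W has_real_derivative
       (- ((-1)^n * (- sin (2 * real n * t) * (2 * real n))) * (4 * real n * cos t)
         - (- ((-1)^n * cos (2 * real n * t))) * (4 * real n * (- sin t))) / (4 * real n * cos t)^2) (at t)"
      unfolding W_def[abs_def]
      by (rule DERIV_divide[THEN DERIV_cong])
        (use n in \<open>auto intro!: derivative_eq_intros simp: c np power2_eq_square algebra_simps\<close>)
    moreover have "(- ((-1)^n * (- sin (2 * real n * t) * (2 * real n))) * (4 * real n * cos t)
         - (- ((-1)^n * cos (2 * real n * t))) * (4 * real n * (- sin t))) / (4 * real n * cos t)^2
       = (-1)^n * sin (2 * real n * t) / (2 * cos t) - G' t"
      unfolding G'_def using c np by (simp add: field_simps power2_eq_square)
    ultimately show ?thesis by simp
  qed
  have derP: "(odd_cos_sum n has_real_derivative ((-1)^n * sin (2 * real n * t) / (2 * cos t))) (at t)"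
    if "\<bar>t\<bar> \<le> \<bar>x\<bar>" for t
    using ct[OF that] by (intro has_real_derivative_odd_cos_sum_closed_form) simp
  have G'_le: "\<bar>G' t\<bar> \<le> 1 / (4 * real n * (cos x)^2)" if "\<bar>t\<bar> \<le> \<bar>x\<bar>" for t
  proof -
    have "\<bar>G' t\<bar> = \<bar>cos (2 * real n * t)\<bar> * \<bar>sin t\<bar> / (4 * real n * (cos t)^2)"
      unfolding G'_def using np by (simp add: abs_mult power_abs)
    also have "\<dots> \<le> 1 / (4 * real n * (cos t)^2)"
      by (intro divide_right_mono mult_le_one) auto
    also have "\<dots> \<le> 1 / (4 * real n * (cos x)^2)"
    proof -
      have "(cos x)^2 \<le> (cos t)^2" using cos_ge[OF that] cx by (intro power_mono) auto
      then show ?thesis using np cx ct[OF that] by (intro divide_left_mono mult_left_mono) auto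
    qed
    finally show ?thesis .
  qed
  have W_le: "\<bar>W t\<bar> \<le> 1 / (4 * real n * cos x)" if "\<bar>t\<bar> \<le> \<bar>x\<bar>" for t
  proof -
    have d: "4 * real n * cos t > 0" using np ct[OF that] by simp
    have "\<bar>W t\<bar> = \<bar>cos (2 * real n * t)\<bar> / (4 * real n * cos t)"
      unfolding W_def abs_divide abs_of_pos[OF d] by (simp add: abs_mult)
    also have "\<dots> \<le> 1 / (4 * real n * cos t)"
      using d by (intro divide_right_mono) auto
    also have "\<dots> \<le> 1 / (4 * real n * cos x)"
      using cos_ge[OF that] cx np by (intro divide_left_mono mult_left_mono mult_pos_pos) auto
    finally show ?thesis .
  qed
  have "\<bar>(odd_cos_sum n y - W y) - (odd_cos_sum n 0 - W 0)\<bar> \<le> 1 / (4 * real n * (cos x)^2) * \<bar>y\<bar>"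
  proof (rule mean_value_bound_centered[where F' = G' and r = "\<bar>x\<bar>"])
    show "((\<lambda>t. odd_cos_sum n t - W t) has_real_derivative G' t) (at t)" if "\<bar>t\<bar> \<le> \<bar>x\<bar>" for t
      using DERIV_diff[OF derP[OF that] derW[OF that]] by simp
    show "\<bar>G' t\<bar> \<le> 1 / (4 * real n * (cos x)^2)" if "\<bar>t\<bar> \<le> \<bar>x\<bar>" for t
      using G'_le[OF that] .
  qed (fact y)
  also have "\<dots> \<le> 1 / (4 * real n * (cos x)^2) * \<bar>x\<bar>"
    using y by (intro mult_left_mono) auto
  finally have "\<bar>odd_cos_sum n y - odd_cos_sum n 0\<bar> \<le> 1 / (4 * real n * (cos x)^2) * \<bar>x\<bar> + 2 / (4 * real n * cos x)"
    using W_le[OF y] W_le[of 0] by (simp add: abs_le_iff)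
  also have "\<dots> \<le> (1 / cos x + \<bar>x\<bar> / (cos x)^2) / real n"
    using cx np by (simp add: field_simps power2_eq_square)
  finally show ?thesis .
qed

lemma odd_cos_sum_0_tendsto: "(\<lambda>n. odd_cos_sum n 0) \<longlonglongrightarrow> pi / 4"
proof -
  have "summable (\<lambda>k. (-1)^k * 1 / real (k * 2 + 1))"
    using summable_arctan_series[of 1] by simp
  then have "(\<lambda>n. \<Sum>k<n. (-1)^k * 1 / real (k * 2 + 1)) \<longlonglongrightarrow> pi / 4"
    unfolding pi_series by (rule summable_LIMSEQ)
  moreover have "odd_cos_sum n 0 = (\<Sum>k<n. (-1)^k * 1 / real (k * 2 + 1))" for n
    unfolding odd_cos_sum_def by (intro sum.cong) (auto simp: mult.commute)
  ultimately show ?thesis by simp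
qed

lemma triangle_sum_tendsto:
  assumes x: "\<bar>x\<bar> < pi/2"
  shows "(\<lambda>n. triangle_sum n x) \<longlonglongrightarrow> pi * x / 4"
proof -
  define C where "C = 1 / cos x + \<bar>x\<bar> / (cos x)^2"
  define e where "e n = C / real n + \<bar>odd_cos_sum n 0 - pi / 4\<bar>" for n
  have "(\<lambda>n. C / real n) \<longlonglongrightarrow> 0" by real_asymp
  moreover have "(\<lambda>n. \<bar>odd_cos_sum n 0 - pi / 4\<bar>) \<longlonglongrightarrow> 0"
    using tendsto_rabs[OF tendsto_diff[OF odd_cos_sum_0_tendsto tendsto_const[of "pi/4"]]] by simp
  ultimately have e0: "e \<longlonglongrightarrow> 0"
    unfolding e_def using tendsto_add by fastforce
  have "\<bar>triangle_sum n x - pi * x / 4\<bar> \<le> e n * \<bar>x\<bar>" if n: "n \<ge> 1" for n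
  proof -
    have "\<bar>(triangle_sum n x - pi * x / 4) - (triangle_sum n 0 - pi * 0 / 4)\<bar> \<le> e n * \<bar>x\<bar>"
    proof (rule mean_value_bound_centered[where F' = "\<lambda>t. odd_cos_sum n t - pi / 4" and r = "\<bar>x\<bar>"])
      show "((\<lambda>t. triangle_sum n t - pi * t / 4) has_real_derivative odd_cos_sum n t - pi / 4) (at t)" for t
        by (auto intro!: derivative_eq_intros has_real_derivative_triangle_sum)
      show "\<bar>odd_cos_sum n t - pi / 4\<bar> \<le> e n" if "\<bar>t\<bar> \<le> \<bar>x\<bar>" for t
        using odd_cos_sum_deviation_le[OF x that n] unfolding e_def C_def by linarith
    qed simp
    moreover have "triangle_sum n 0 = 0" by (simp add: triangle_sum_def)
    ultimately show ?thesis by simp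
  qed
  then have "\<forall>\<^sub>F n in sequentially. norm (triangle_sum n x - pi * x / 4) \<le> e n * \<bar>x\<bar>"
    by (auto simp: eventually_sequentially intro!: exI[of _ 1])
  then have "(\<lambda>n. triangle_sum n x - pi * x / 4) \<longlonglongrightarrow> 0"
    by (rule Lim_null_comparison) (rule tendsto_mult_left_zero[OF e0])
  then show ?thesis by (simp add: LIM_zero_iff)
qed

lemma abs_triangle_sum_le: "\<bar>triangle_sum n x\<bar> \<le> pi\<^sup>2 / 8"
proof -
  have "\<bar>triangle_sum n x\<bar> \<le> (\<Sum>k<n. \<bar>(-1)^k * sin ((2 * real k + 1) * x) / (2 * real k + 1)^2\<bar>)"
    unfolding triangle_sum_def by (rule sum_abs)
  also have "\<dots> \<le> (\<Sum>k<n. 1 / (2 * real k + 1)^2)"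
    by (intro sum_mono) (simp add: abs_mult divide_right_mono)
  also have "\<dots> \<le> pi\<^sup>2 / 8" by (rule sum_odd_inverse_squares_le)
  finally show ?thesis .
qed

section \<open>Fourier inversion and Bernstein's inequality\<close>

lemma borel_measurable_cis [measurable]: "cis \<in> borel_measurable borel"
  by (intro borel_measurable_continuous_onI continuous_intros)

lemma norm_cis_diff_le: "norm (cis a - cis b) \<le> \<bar>a - b\<bar>"
proof -
  have "cis a - cis b = cis b * (cis (a - b) - 1)" by (simp add: algebra_simps cis_mult)
  moreover have "norm (cis (a - b) - 1) \<le> \<bar>a - b\<bar>"
    using iexp_approx1[of "a - b" 0] by (simp add: cis_conv_exp)
  ultimately show ?thesis by (simp add: norm_mult)
qed

lemma cis_add_minus_cis_diff: "cis (z + y) - cis (z - y) = \<i> * complex_of_real (2 * sin y) * cis z"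
  by (simp add: complex_eq_iff cos_add sin_add cos_diff sin_diff algebra_simps)

text \<open>The Fourier transform of the centred normal density with standard deviation \<open>e\<close>.\<close>
definition gauss_multiplier :: "real \<Rightarrow> real \<Rightarrow> real" where
  "gauss_multiplier e \<xi> = exp (- 2 * pi\<^sup>2 * e\<^sup>2 * \<xi>\<^sup>2)"

lemma gauss_multiplier_eq: "gauss_multiplier e \<xi> = sqrt (2 * pi) * std_normal_density (0 + (2 * pi * e) * \<xi>)"
  by (simp add: gauss_multiplier_def std_normal_density_def power_mult_distrib)

lemma gauss_multiplier_measurable [measurable]: "gauss_multiplier e \<in> borel_measurable borel"
  unfolding gauss_multiplier_def by measurable

lemma integrable_gauss_multiplier: "e > 0 \<Longrightarrow> integrable lborel (gauss_multiplier e)"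
  unfolding gauss_multiplier_eq by (intro integrable_mult_right lborel_integrable_real_affine) auto

lemma inverse_fourier_gauss_multiplier:
  assumes e: "e > 0"
  shows "(\<integral>\<xi>. complex_of_real (gauss_multiplier e \<xi>) * cis (2 * pi * \<xi> * y) \<partial>lborel)
       = complex_of_real (std_normal_density (y / e) / e)"
proof -
  define G where "G x = std_normal_density x *\<^sub>R cis (y / e * x)" for x
  define I where "I = (\<integral>\<xi>. complex_of_real (gauss_multiplier e \<xi>) * cis (2 * pi * \<xi> * y) \<partial>lborel)"
  have ce: "2 * pi * e \<noteq> 0" using e by simp
  have "G (0 + (2 * pi * e) * \<xi>)
      = complex_of_real (1 / sqrt (2 * pi)) * (complex_of_real (gauss_multiplier e \<xi>) * cis (2 * pi * \<xi> * y))" for \<xi>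
    unfolding G_def gauss_multiplier_eq using e by (simp add: scaleR_conv_of_real field_simps)
  then have "(\<integral>x. G x \<partial>lborel) = complex_of_real (2 * pi * e / sqrt (2 * pi)) * I"
    unfolding lborel_integral_real_affine[OF ce, of G 0] I_def using e by (simp add: scaleR_conv_of_real)
  moreover have "(\<integral>x. G x \<partial>lborel) = char std_normal_distribution (y / e)"
    unfolding char_def G_def cis_conv_exp by (subst integral_density) auto
  ultimately have "complex_of_real (2 * pi * e / sqrt (2 * pi)) * I = complex_of_real (exp (- ((y / e)^2) / 2))"
    using char_std_normal_distribution by simp
  then have "I = complex_of_real (exp (- ((y / e)^2) / 2) / (2 * pi * e / sqrt (2 * pi)))"
    using e by (simp add: field_simps)
  also have "exp (- ((y / e)^2) / 2) / (2 * pi * e / sqrt (2 * pi)) = std_normal_density (y / e) / e"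
  proof -
    have "sqrt (2 * pi) * sqrt (2 * pi) = 2 * pi" by simp
    then show ?thesis unfolding std_normal_density_def using e by (simp add: field_simps)
  qed
  finally show ?thesis unfolding I_def .
qed

locale bandlimited_signal =
  fixes f :: "real \<Rightarrow> real" and \<sigma> M :: real
  assumes sigma_pos: "\<sigma> > 0"
    and f_continuous: "continuous_on UNIV f"
    and f_integrable: "integrable lborel f"
    and f_bounded: "\<And>t. \<bar>f t\<bar> \<le> M"
    and f_bandlimited: "bandlimited \<sigma> f"
begin

definition cutoff :: real where "cutoff = \<sigma> / (2 * pi)"

definition l1_norm :: real where "l1_norm = (\<integral>t. \<bar>f t\<bar> \<partial>lborel)"

lemma cutoff_pos: "cutoff > 0"
  using sigma_pos by (simp add: cutoff_def)

lemma f_measurable [measurable]: "f \<in> borel_measurable borel"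
  using f_continuous by (rule borel_measurable_continuous_onI)

lemma fourier_transform_measurable [measurable]: "fourier_transform f \<in> borel_measurable borel"
  unfolding fourier_transform_def[abs_def] by measurable

lemma norm_fourier_transform_le: "norm (fourier_transform f \<xi>) \<le> l1_norm"
proof -
  have "norm (fourier_transform f \<xi>) \<le> (\<integral>t. norm (complex_of_real (f t) * cis (- 2 * pi * \<xi> * t)) \<partial>lborel)"
    unfolding fourier_transform_def by (rule integral_norm_bound)
  then show ?thesis unfolding l1_norm_def by (simp add: norm_mult)
qed

lemma fourier_transform_eq_0: "\<bar>\<xi>\<bar> > cutoff \<Longrightarrow> fourier_transform f \<xi> = 0"
  using f_bandlimited unfolding bandlimited_def cutoff_def by auto

lemma norm_fourier_transform_mult_le:
  assumes "\<And>\<xi>. \<bar>\<xi>\<bar> \<le> cutoff \<Longrightarrow> norm (k \<xi>) \<le> B"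
  shows "norm (fourier_transform f \<xi> * k \<xi>) \<le> (l1_norm * \<bar>B\<bar>) * indicator {-cutoff..cutoff} \<xi>"
proof (cases "\<bar>\<xi>\<bar> \<le> cutoff")
  case True
  have "norm (fourier_transform f \<xi> * k \<xi>) \<le> l1_norm * \<bar>B\<bar>"
    unfolding norm_mult using norm_fourier_transform_le[of \<xi>] order_trans[OF assms[OF True] abs_ge_self]
    by (intro mult_mono) (auto simp: l1_norm_def)
  then show ?thesis using True by (auto simp: indicator_def abs_le_iff)
next
  case False
  then show ?thesis using fourier_transform_eq_0[of \<xi>] by (simp add: l1_norm_def)
qed

lemma integrable_fourier_transform_mult:
  assumes [measurable]: "k \<in> borel_measurable borel"
    and "\<And>\<xi>. \<bar>\<xi>\<bar> \<le> cutoff \<Longrightarrow> norm (k \<xi>) \<le> B"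
  shows "integrable lborel (\<lambda>\<xi>. fourier_transform f \<xi> * k \<xi>)"
proof (rule Bochner_Integration.integrable_bound)
  show "integrable lborel (\<lambda>\<xi>. (l1_norm * \<bar>B\<bar>) * indicator {-cutoff..cutoff} \<xi>)"
    using borel_integrable_atLeastAtMost[of "-cutoff" cutoff "\<lambda>_. 1::real"] by simp
  show "AE \<xi> in lborel. norm (fourier_transform f \<xi> * k \<xi>) \<le> norm ((l1_norm * \<bar>B\<bar>) * indicator {-cutoff..cutoff} \<xi>)"
    using norm_fourier_transform_mult_le[OF assms(2)] by (auto intro!: AE_I2 simp: l1_norm_def)
qed simp

lemma integrable_inverse_fourier: "integrable lborel (\<lambda>\<xi>. fourier_transform f \<xi> * cis (2 * pi * \<xi> * t))"
  by (rule integrable_fourier_transform_mult[where B = 1]) auto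

lemma inverse_fourier_tendsto:
  assumes [measurable]: "\<And>i. k i \<in> borel_measurable borel" "k0 \<in> borel_measurable borel"
    and bound: "\<And>i \<xi>. \<bar>\<xi>\<bar> \<le> cutoff \<Longrightarrow> norm (k i \<xi>) \<le> B"
    and lim: "\<And>\<xi>. \<bar>\<xi>\<bar> < cutoff \<Longrightarrow> (\<lambda>i. k i \<xi>) \<longlonglongrightarrow> k0 \<xi>"
  shows "(\<lambda>i. \<integral>\<xi>. fourier_transform f \<xi> * k i \<xi> \<partial>lborel) \<longlonglongrightarrow> (\<integral>\<xi>. fourier_transform f \<xi> * k0 \<xi> \<partial>lborel)"
proof (rule integral_dominated_convergence[where w = "\<lambda>\<xi>. (l1_norm * \<bar>B\<bar>) * indicator {-cutoff..cutoff} \<xi>"])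
  show "integrable lborel (\<lambda>\<xi>. (l1_norm * \<bar>B\<bar>) * indicator {-cutoff..cutoff} \<xi>)"
    using borel_integrable_atLeastAtMost[of "-cutoff" cutoff "\<lambda>_. 1::real"] by simp
  show "AE \<xi> in lborel. (\<lambda>i. fourier_transform f \<xi> * k i \<xi>) \<longlonglongrightarrow> fourier_transform f \<xi> * k0 \<xi>"
    using AE_lborel_singleton[of cutoff] AE_lborel_singleton[of "-cutoff"]
  proof eventually_elim
    case (elim \<xi>)
    show ?case
    proof (cases "\<bar>\<xi>\<bar> < cutoff")
      case True
      then show ?thesis using lim[OF True] by (intro tendsto_intros)
    next
      case False
      with elim have "\<bar>\<xi>\<bar> > cutoff" by auto
      then show ?thesis using fourier_transform_eq_0[of \<xi>] by simp
    qed
  qed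
  show "AE \<xi> in lborel. norm (fourier_transform f \<xi> * k i \<xi>) \<le> (l1_norm * \<bar>B\<bar>) * indicator {-cutoff..cutoff} \<xi>" for i
    using norm_fourier_transform_mult_le[OF bound] by (intro AE_I2)
qed simp_all

lemma inverse_fourier_gauss_damped:
  assumes e: "e > 0"
  shows "(\<integral>\<xi>. fourier_transform f \<xi> * (complex_of_real (gauss_multiplier e \<xi>) * cis (2 * pi * \<xi> * t)) \<partial>lborel)
       = (\<integral>u. complex_of_real (f (t - e * u) * std_normal_density u) \<partial>lborel)"
proof -
  define H where "H \<xi> s = complex_of_real (f s) * cis (- 2 * pi * \<xi> * s)
      * (complex_of_real (gauss_multiplier e \<xi>) * cis (2 * pi * \<xi> * t))" for \<xi> s
  have [measurable]: "(\<lambda>(\<xi>, s). H \<xi> s) \<in> borel_measurable (lborel \<Otimes>\<^sub>M lborel)"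
    unfolding H_def by measurable
  have norm_H: "norm (H \<xi> s) = gauss_multiplier e \<xi> * \<bar>f s\<bar>" for \<xi> s
    unfolding H_def by (simp add: norm_mult gauss_multiplier_def)
  have "integrable (lborel \<Otimes>\<^sub>M lborel) (\<lambda>(\<xi>, s). H \<xi> s)"
  proof (rule lborel_pair.Fubini_integrable)
    show "integrable lborel (\<lambda>\<xi>. \<integral>s. norm (case (\<xi>, s) of (\<xi>, s) \<Rightarrow> H \<xi> s) \<partial>lborel)"
      using integrable_gauss_multiplier[OF e] by (simp add: norm_H)
    show "AE \<xi> in lborel. integrable lborel (\<lambda>s. case (\<xi>, s) of (\<xi>, s) \<Rightarrow> H \<xi> s)"
    proof (intro AE_I2)
      fix \<xi>
      show "integrable lborel (\<lambda>s. case (\<xi>, s) of (\<xi>, s) \<Rightarrow> H \<xi> s)"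
      proof (rule Bochner_Integration.integrable_bound)
        show "integrable lborel (\<lambda>s. gauss_multiplier e \<xi> * f s)"
          using f_integrable by simp
        show "AE s in lborel. norm (case (\<xi>, s) of (\<xi>, s) \<Rightarrow> H \<xi> s) \<le> norm (gauss_multiplier e \<xi> * f s)"
          by (simp add: norm_H abs_mult gauss_multiplier_def)
      qed simp
    qed
  qed simp
  from lborel_pair.Fubini_integral[OF this]
  have "(\<integral>\<xi>. (\<integral>s. H \<xi> s \<partial>lborel) \<partial>lborel) = (\<integral>s. (\<integral>\<xi>. H \<xi> s \<partial>lborel) \<partial>lborel)"
    by simp
  moreover have "(\<integral>\<xi>. H \<xi> s \<partial>lborel) = complex_of_real (f s * (std_normal_density ((t - s) / e) / e))" for s
  proof -
    have "H \<xi> s = complex_of_real (f s) * (complex_of_real (gauss_multiplier e \<xi>) * cis (2 * pi * \<xi> * (t - s)))" for \<xi>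
    proof -
      have "cis (- 2 * pi * \<xi> * s) * cis (2 * pi * \<xi> * t) = cis (2 * pi * \<xi> * (t - s))"
        by (simp add: cis_mult algebra_simps)
      then show ?thesis unfolding H_def by (simp add: ac_simps)
    qed
    then show ?thesis using inverse_fourier_gauss_multiplier[OF e, of "t - s"] by simp
  qed
  moreover have "(\<integral>s. complex_of_real (f s * (std_normal_density ((t - s) / e) / e)) \<partial>lborel)
      = (\<integral>u. complex_of_real (f (t - e * u) * std_normal_density u) \<partial>lborel)"
    using lborel_integral_real_affine[of "- e" "\<lambda>s. complex_of_real (f s * (std_normal_density ((t - s) / e) / e))" t] e
    by (simp add: scaleR_conv_of_real)
  ultimately show ?thesis
    unfolding fourier_transform_def H_def by simp
qed

theorem fourier_inversion:
  "complex_of_real (f t) = (\<integral>\<xi>. fourier_transform f \<xi> * cis (2 * pi * \<xi> * t) \<partial>lborel)"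
proof -
  define e where "e n = 1 / (real n + 1)" for n
  have e_pos: "e n > 0" for n unfolding e_def by simp
  have e_tendsto: "e \<longlonglongrightarrow> 0" unfolding e_def by real_asymp
  have damped_tendsto: "(\<lambda>n. \<integral>\<xi>. fourier_transform f \<xi> * (complex_of_real (gauss_multiplier (e n) \<xi>) * cis (2 * pi * \<xi> * t)) \<partial>lborel)
      \<longlonglongrightarrow> (\<integral>\<xi>. fourier_transform f \<xi> * cis (2 * pi * \<xi> * t) \<partial>lborel)"
  proof (rule inverse_fourier_tendsto[where B = 1])
    fix \<xi>
    have "(\<lambda>n. gauss_multiplier (e n) \<xi>) \<longlonglongrightarrow> exp (- 2 * pi\<^sup>2 * 0\<^sup>2 * \<xi>\<^sup>2)"
      unfolding gauss_multiplier_def by (intro tendsto_intros e_tendsto)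
    then have "(\<lambda>n. complex_of_real (gauss_multiplier (e n) \<xi>)) \<longlonglongrightarrow> complex_of_real 1"
      by (intro tendsto_of_real) simp
    from tendsto_mult_right[OF this, of "cis (2 * pi * \<xi> * t)"]
    show "(\<lambda>n. complex_of_real (gauss_multiplier (e n) \<xi>) * cis (2 * pi * \<xi> * t)) \<longlonglongrightarrow> cis (2 * pi * \<xi> * t)"
      by simp
    show "norm (complex_of_real (gauss_multiplier (e n) \<xi>) * cis (2 * pi * \<xi> * t)) \<le> 1" for n \<xi>
      by (simp add: norm_mult gauss_multiplier_def)
  qed simp_all
  have "(\<lambda>n. \<integral>u. complex_of_real (f (t - e n * u) * std_normal_density u) \<partial>lborel)
      \<longlonglongrightarrow> (\<integral>u. complex_of_real (f t * std_normal_density u) \<partial>lborel)"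
  proof (rule integral_dominated_convergence[where w = "\<lambda>u. M * std_normal_density u"])
    show "AE u in lborel. (\<lambda>n. complex_of_real (f (t - e n * u) * std_normal_density u))
        \<longlonglongrightarrow> complex_of_real (f t * std_normal_density u)"
    proof (intro AE_I2 tendsto_intros)
      fix u
      have "(\<lambda>n. t - e n * u) \<longlonglongrightarrow> t - 0 * u" by (intro tendsto_intros e_tendsto)
      then show "(\<lambda>n. f (t - e n * u)) \<longlonglongrightarrow> f t"
        using f_continuous isCont_tendsto_compose[of t f] by (simp add: continuous_on_eq_continuous_at)
    qed
    show "AE u in lborel. norm (complex_of_real (f (t - e n * u) * std_normal_density u)) \<le> M * std_normal_density u" for n
      using f_bounded by (intro AE_I2) (auto simp: norm_mult intro!: mult_right_mono)
  qed simp_all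
  moreover have "(\<integral>u. complex_of_real (f t * std_normal_density u) \<partial>lborel) = complex_of_real (f t)"
    by (simp add: integral_of_real[symmetric] del: integral_of_real)
  ultimately show ?thesis
    using LIMSEQ_unique[OF _ damped_tendsto] by (simp add: inverse_fourier_gauss_damped[OF e_pos])
qed


definition fourier_derivative :: "real \<Rightarrow> complex" where
  "fourier_derivative t =
     (\<integral>\<xi>. fourier_transform f \<xi> * (\<i> * complex_of_real (2 * pi * \<xi>) * cis (2 * pi * \<xi> * t)) \<partial>lborel)"

lemma difference_quotient_cis_tendsto:
  assumes "\<forall>i. X i \<noteq> t" "X \<longlonglongrightarrow> t"
  shows "(\<lambda>i. (cis (2 * pi * \<xi> * X i) - cis (2 * pi * \<xi> * t)) / complex_of_real (X i - t))
      \<longlonglongrightarrow> \<i> * complex_of_real (2 * pi * \<xi>) * cis (2 * pi * \<xi> * t)"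
proof -
  define E where "E z = exp (\<i> * complex_of_real (2 * pi * \<xi>) * z)" for z
  have E_cis: "E (complex_of_real s) = cis (2 * pi * \<xi> * s)" for s
    unfolding E_def cis_conv_exp by (simp add: mult_ac)
  have "(E has_field_derivative (\<i> * complex_of_real (2 * pi * \<xi>) * E t)) (at t)"
    unfolding E_def by (auto intro!: derivative_eq_intros)
  then have "((\<lambda>z. (E z - E t) / (z - t)) \<longlongrightarrow> \<i> * complex_of_real (2 * pi * \<xi>) * E t) (at (complex_of_real t))"
    by (simp add: has_field_derivative_iff)
  moreover have "(\<lambda>i. complex_of_real (X i)) \<longlonglongrightarrow> complex_of_real t"
    using assms(2) by (intro tendsto_intros)
  moreover have "\<forall>i. complex_of_real (X i) \<in> UNIV - {complex_of_real t}"
    using assms(1) by auto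
  ultimately show ?thesis
    unfolding tendsto_at_iff_sequentially comp_def E_cis[symmetric] by simp
qed

theorem has_real_derivative_f: "(f has_real_derivative Re (fourier_derivative t)) (at t)"
proof -
  have "(\<lambda>i. (f (X i) - f t) / (X i - t)) \<longlonglongrightarrow> Re (fourier_derivative t)"
    if X: "\<forall>i. X i \<in> UNIV - {t}" "X \<longlonglongrightarrow> t" for X
  proof -
    define k where "k i \<xi> = (cis (2 * pi * \<xi> * X i) - cis (2 * pi * \<xi> * t)) / complex_of_real (X i - t)" for i \<xi>
    have quotient_eq: "complex_of_real ((f (X i) - f t) / (X i - t)) = (\<integral>\<xi>. fourier_transform f \<xi> * k i \<xi> \<partial>lborel)" for i
    proof -
      have "complex_of_real ((f (X i) - f t) / (X i - t))
          = ((\<integral>\<xi>. fourier_transform f \<xi> * cis (2 * pi * \<xi> * X i) \<partial>lborel)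
             - (\<integral>\<xi>. fourier_transform f \<xi> * cis (2 * pi * \<xi> * t) \<partial>lborel)) / complex_of_real (X i - t)"
        by (simp add: fourier_inversion[symmetric])
      also have "\<dots> = (\<integral>\<xi>. (fourier_transform f \<xi> * cis (2 * pi * \<xi> * X i)
          - fourier_transform f \<xi> * cis (2 * pi * \<xi> * t)) / complex_of_real (X i - t) \<partial>lborel)"
        using integrable_inverse_fourier by simp
      also have "\<dots> = (\<integral>\<xi>. fourier_transform f \<xi> * k i \<xi> \<partial>lborel)"
        unfolding k_def by (simp add: algebra_simps)
      finally show ?thesis .
    qed
    have "(\<lambda>i. \<integral>\<xi>. fourier_transform f \<xi> * k i \<xi> \<partial>lborel) \<longlonglongrightarrow> fourier_derivative t"
      unfolding fourier_derivative_def
    proof (rule inverse_fourier_tendsto[where B = "2 * pi * cutoff"])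
      show "k i \<in> borel_measurable borel" for i unfolding k_def by measurable
      show "norm (k i \<xi>) \<le> 2 * pi * cutoff" if "\<bar>\<xi>\<bar> \<le> cutoff" for i \<xi>
      proof -
        have "X i - t \<noteq> 0" using X(1) by auto
        then have "norm (k i \<xi>) \<le> \<bar>2 * pi * \<xi> * X i - 2 * pi * \<xi> * t\<bar> / \<bar>X i - t\<bar>"
          unfolding k_def norm_divide norm_of_real by (intro divide_right_mono norm_cis_diff_le) auto
        also have "\<dots> = 2 * pi * \<bar>\<xi>\<bar>"
          using \<open>X i - t \<noteq> 0\<close> by (simp add: abs_mult right_diff_distrib[symmetric] mult.assoc)
        also have "\<dots> \<le> 2 * pi * cutoff" using that by simp
        finally show ?thesis .
      qed
      show "(\<lambda>i. k i \<xi>) \<longlonglongrightarrow> \<i> * complex_of_real (2 * pi * \<xi>) * cis (2 * pi * \<xi> * t)" for \<xi>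
        unfolding k_def using X by (intro difference_quotient_cis_tendsto) auto
    qed measurable
    from tendsto_Re[OF this] show ?thesis
      unfolding quotient_eq[symmetric] by simp
  qed
  then have "((\<lambda>y. (f y - f t) / (y - t)) \<longlongrightarrow> Re (fourier_derivative t)) (at t)"
    unfolding tendsto_at_iff_sequentially comp_def by blast
  then show ?thesis by (simp add: has_field_derivative_iff)
qed

lemma isCont_fourier_derivative: "isCont fourier_derivative t"
proof (unfold continuous_at_sequentially comp_def, intro allI impI)
  fix X :: "nat \<Rightarrow> real"
  assume "X \<longlonglongrightarrow> t"
  then show "(\<lambda>i. fourier_derivative (X i)) \<longlonglongrightarrow> fourier_derivative t"
    unfolding fourier_derivative_def
    by (intro inverse_fourier_tendsto[where B = "2 * pi * cutoff"] tendsto_intros)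
      (auto simp: norm_mult abs_mult)
qed

text \<open>The shifts and weights of M. Riesz's interpolation formula for \<open>f'\<close>.\<close>
definition riesz_weight :: "nat \<Rightarrow> real" where
  "riesz_weight j = 4 * \<sigma> / pi\<^sup>2 * ((-1)^j / (2 * real j + 1)^2)"

definition riesz_node :: "nat \<Rightarrow> real" where
  "riesz_node j = (2 * real j + 1) / (4 * cutoff)"

definition riesz_kernel :: "nat \<Rightarrow> real \<Rightarrow> real \<Rightarrow> complex" where
  "riesz_kernel n t \<xi> =
     \<i> * complex_of_real (8 * \<sigma> / pi\<^sup>2 * triangle_sum n (pi * \<xi> / (2 * cutoff))) * cis (2 * pi * \<xi> * t)"

lemma riesz_kernel_eq:
  "riesz_kernel n t \<xi> = (\<Sum>j<n. complex_of_real (riesz_weight j)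
      * (cis (2 * pi * \<xi> * (t + riesz_node j)) - cis (2 * pi * \<xi> * (t - riesz_node j))))"
proof -
  have "cis (2 * pi * \<xi> * (t + riesz_node j)) - cis (2 * pi * \<xi> * (t - riesz_node j))
      = \<i> * complex_of_real (2 * sin ((2 * real j + 1) * (pi * \<xi> / (2 * cutoff)))) * cis (2 * pi * \<xi> * t)" for j
  proof -
    have "2 * pi * \<xi> * riesz_node j = (2 * real j + 1) * (pi * \<xi> / (2 * cutoff))"
      unfolding riesz_node_def using cutoff_pos by (simp add: field_simps)
    then show ?thesis
      using cis_add_minus_cis_diff[of "2 * pi * \<xi> * t" "2 * pi * \<xi> * riesz_node j"]
      by (simp add: distrib_left right_diff_distrib)
  qed
  then show ?thesis
    unfolding riesz_kernel_def triangle_sum_def riesz_weight_def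
    by (simp add: sum_distrib_left sum_distrib_right field_simps)
qed

lemma norm_riesz_kernel_le: "norm (riesz_kernel n t \<xi>) \<le> \<sigma>"
proof -
  have "norm (riesz_kernel n t \<xi>) = 8 * \<sigma> / pi\<^sup>2 * \<bar>triangle_sum n (pi * \<xi> / (2 * cutoff))\<bar>"
    unfolding riesz_kernel_def norm_mult norm_of_real using sigma_pos by (simp add: abs_mult)
  also have "\<dots> \<le> 8 * \<sigma> / pi\<^sup>2 * (pi\<^sup>2 / 8)"
    using sigma_pos by (intro mult_left_mono abs_triangle_sum_le) auto
  finally show ?thesis by simp
qed

lemma riesz_kernel_tendsto:
  assumes "\<bar>\<xi>\<bar> < cutoff"
  shows "(\<lambda>n. riesz_kernel n t \<xi>) \<longlonglongrightarrow> \<i> * complex_of_real (2 * pi * \<xi>) * cis (2 * pi * \<xi> * t)"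
proof -
  have "\<bar>pi * \<xi> / (2 * cutoff)\<bar> < pi / 2"
    using assms cutoff_pos by (simp add: abs_mult field_simps)
  then have "(\<lambda>n. 8 * \<sigma> / pi\<^sup>2 * triangle_sum n (pi * \<xi> / (2 * cutoff)))
      \<longlonglongrightarrow> 8 * \<sigma> / pi\<^sup>2 * (pi * (pi * \<xi> / (2 * cutoff)) / 4)"
    by (intro tendsto_mult_left triangle_sum_tendsto)
  moreover have "8 * \<sigma> / pi\<^sup>2 * (pi * (pi * \<xi> / (2 * cutoff)) / 4) = 2 * pi * \<xi>"
    unfolding cutoff_def using sigma_pos by (simp add: field_simps power2_eq_square)
  ultimately have "(\<lambda>n. complex_of_real (8 * \<sigma> / pi\<^sup>2 * triangle_sum n (pi * \<xi> / (2 * cutoff))))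
      \<longlonglongrightarrow> complex_of_real (2 * pi * \<xi>)"
    by (intro tendsto_of_real) simp
  then show ?thesis
    unfolding riesz_kernel_def by (intro tendsto_mult_right tendsto_mult_left)
qed

lemma inverse_fourier_riesz_kernel:
  "(\<integral>\<xi>. fourier_transform f \<xi> * riesz_kernel n t \<xi> \<partial>lborel)
     = complex_of_real (\<Sum>j<n. riesz_weight j * (f (t + riesz_node j) - f (t - riesz_node j)))"
proof -
  let ?e = "\<lambda>s \<xi>. fourier_transform f \<xi> * cis (2 * pi * \<xi> * s)"
  have "(\<integral>\<xi>. fourier_transform f \<xi> * riesz_kernel n t \<xi> \<partial>lborel)
      = (\<integral>\<xi>. (\<Sum>j<n. complex_of_real (riesz_weight j) * ?e (t + riesz_node j) \<xi>
                    - complex_of_real (riesz_weight j) * ?e (t - riesz_node j) \<xi>) \<partial>lborel)"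
    unfolding riesz_kernel_eq by (simp add: sum_distrib_left algebra_simps)
  also have "\<dots> = (\<Sum>j<n. complex_of_real (riesz_weight j) * (\<integral>\<xi>. ?e (t + riesz_node j) \<xi> \<partial>lborel)
                    - complex_of_real (riesz_weight j) * (\<integral>\<xi>. ?e (t - riesz_node j) \<xi> \<partial>lborel))"
    using integrable_inverse_fourier by simp
  also have "\<dots> = complex_of_real (\<Sum>j<n. riesz_weight j * (f (t + riesz_node j) - f (t - riesz_node j)))"
    unfolding fourier_inversion[symmetric] by (simp add: algebra_simps)
  finally show ?thesis .
qed

lemma sum_abs_riesz_weight_le: "(\<Sum>j<n. \<bar>riesz_weight j\<bar>) \<le> \<sigma> / 2"
proof -
  have "(\<Sum>j<n. \<bar>riesz_weight j\<bar>) = 4 * \<sigma> / pi\<^sup>2 * (\<Sum>j<n. 1 / (2 * real j + 1)\<^sup>2)"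
    unfolding riesz_weight_def sum_distrib_left using sigma_pos by (intro sum.cong) (auto simp: abs_mult)
  also have "\<dots> \<le> 4 * \<sigma> / pi\<^sup>2 * (pi\<^sup>2 / 8)"
    using sigma_pos by (intro mult_left_mono sum_odd_inverse_squares_le) auto
  finally show ?thesis by simp
qed

theorem norm_fourier_derivative_le: "norm (fourier_derivative t) \<le> \<sigma> * M"
proof -
  have "(\<lambda>n. \<integral>\<xi>. fourier_transform f \<xi> * riesz_kernel n t \<xi> \<partial>lborel) \<longlonglongrightarrow> fourier_derivative t"
    unfolding fourier_derivative_def
    by (rule inverse_fourier_tendsto[OF _ _ norm_riesz_kernel_le riesz_kernel_tendsto])
      (auto simp: riesz_kernel_def triangle_sum_def)
  moreover have "norm (\<integral>\<xi>. fourier_transform f \<xi> * riesz_kernel n t \<xi> \<partial>lborel) \<le> \<sigma> * M" for n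
  proof -
    have "norm (\<integral>\<xi>. fourier_transform f \<xi> * riesz_kernel n t \<xi> \<partial>lborel)
        \<le> (\<Sum>j<n. \<bar>riesz_weight j\<bar> * \<bar>f (t + riesz_node j) - f (t - riesz_node j)\<bar>)"
      unfolding inverse_fourier_riesz_kernel norm_of_real
      by (rule order_trans[OF sum_abs]) (simp add: abs_mult)
    also have "\<dots> \<le> (\<Sum>j<n. \<bar>riesz_weight j\<bar> * (2 * M))"
    proof (intro sum_mono mult_left_mono)
      show "\<bar>f (t + riesz_node j) - f (t - riesz_node j)\<bar> \<le> 2 * M" for j
        using abs_triangle_ineq4[of "f (t + riesz_node j)" "f (t - riesz_node j)"]
          f_bounded[of "t + riesz_node j"] f_bounded[of "t - riesz_node j"] by linarith
    qed simp
    also have "\<dots> \<le> \<sigma> / 2 * (2 * M)"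
      unfolding sum_distrib_right[symmetric] using f_bounded[of 0]
      by (intro mult_right_mono sum_abs_riesz_weight_le) auto
    finally show ?thesis by simp
  qed
  ultimately show ?thesis
    by (intro LIMSEQ_le_const2[OF tendsto_norm]) auto
qed

end

section \<open>Perturbed dilations\<close>

definition abs_powr_antideriv :: "real \<Rightarrow> real \<Rightarrow> real" where
  "abs_powr_antideriv p y = sgn y * \<bar>y\<bar> powr (p + 1) / (p + 1)"

lemma has_real_derivative_abs_powr_antideriv:
  assumes p: "p > 0"
  shows "(abs_powr_antideriv p has_real_derivative \<bar>y\<bar> powr p) (at y)"
proof -
  consider "y > 0" | "y < 0" | "y = 0" by linarith
  then show ?thesis
  proof cases
    case 1
    have "((\<lambda>z. z powr (p + 1) / (p + 1)) has_real_derivative (p + 1) * y powr (p + 1 - 1) / (p + 1)) (at y)"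
      using 1 by (intro DERIV_cdivide has_real_derivative_powr) auto
    then have "((\<lambda>z. z powr (p + 1) / (p + 1)) has_real_derivative \<bar>y\<bar> powr p) (at y)"
      using 1 p by simp
    then show ?thesis
      by (rule has_field_derivative_transform_within_open[of _ _ _ "{0<..}"])
        (use 1 in \<open>auto simp: abs_powr_antideriv_def\<close>)
  next
    case 2
    have "((\<lambda>z. - ((- z) powr (p + 1) / (p + 1))) has_real_derivative
        - ((p + 1) * (- y) powr (p + 1 - 1) * (- 1) / (p + 1))) (at y)"
      using 2 by (auto intro!: derivative_eq_intros DERIV_cdivide DERIV_chain2[OF has_real_derivative_powr])
    then have "((\<lambda>z. - ((- z) powr (p + 1) / (p + 1))) has_real_derivative \<bar>y\<bar> powr p) (at y)"
      using 2 p by simp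
    then show ?thesis
      by (rule has_field_derivative_transform_within_open[of _ _ _ "{..<0}"])
        (use 2 in \<open>auto simp: abs_powr_antideriv_def\<close>)
  next
    case 3
    have quotient: "(abs_powr_antideriv p z - abs_powr_antideriv p 0) / z = \<bar>z\<bar> powr p / (p + 1)"
      if "z \<noteq> 0" for z
    proof -
      have "abs_powr_antideriv p z = (sgn z * \<bar>z\<bar>) * (\<bar>z\<bar> powr p / (p + 1))"
        unfolding abs_powr_antideriv_def using that by (simp add: powr_add)
      then have "abs_powr_antideriv p z = z * (\<bar>z\<bar> powr p / (p + 1))"
        by (simp add: sgn_mult_abs)
      moreover have "abs_powr_antideriv p 0 = 0" by (simp add: abs_powr_antideriv_def)
      ultimately show ?thesis using that by simp
    qed
    have "((\<lambda>z. \<bar>z\<bar> powr p / (p + 1)) \<longlongrightarrow> 0 / (p + 1)) (at 0)"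
      using p by (intro tendsto_divide tendsto_zero_powrI tendsto_const) (auto intro!: tendsto_eq_intros)
    then have "((\<lambda>z. (abs_powr_antideriv p z - abs_powr_antideriv p 0) / (z - 0)) \<longlongrightarrow> 0) (at 0)"
      by (subst tendsto_cong[where g = "\<lambda>z. \<bar>z\<bar> powr p / (p + 1)"])
        (auto simp: eventually_at_filter quotient intro!: always_eventually)
    then show ?thesis using 3 p by (simp add: has_field_derivative_iff)
  qed
qed

lemma nn_integral_interval_tendsto:
  fixes H :: "real \<Rightarrow> real" and a b :: "nat \<Rightarrow> real"
  assumes [measurable]: "H \<in> borel_measurable borel" and H_nonneg: "\<And>x. 0 \<le> H x"
    and "decseq a" "incseq b"
    and "filterlim a at_bot sequentially" "filterlim b at_top sequentially"
  shows "(\<lambda>n. \<integral>\<^sup>+x. ennreal (H x * indicator {a n..b n} x) \<partial>lborel) \<longlonglongrightarrow> (\<integral>\<^sup>+x. ennreal (H x) \<partial>lborel)"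
proof (rule nn_integral_LIMSEQ)
  show "incseq (\<lambda>n x. ennreal (H x * indicator {a n..b n} x))"
  proof (intro monoI le_funI ennreal_leI mult_left_mono H_nonneg)
    fix m n :: nat and x
    assume "m \<le> n"
    then have "a n \<le> a m" "b m \<le> b n" using assms(3,4) by (auto simp: decseq_def incseq_def)
    then show "indicator {a m..b m} x \<le> (indicator {a n..b n} x :: real)"
      by (auto simp: indicator_def)
  qed
  show "(\<lambda>n. ennreal (H x * indicator {a n..b n} x)) \<longlonglongrightarrow> ennreal (H x)" for x
  proof (rule tendsto_eventually)
    have "eventually (\<lambda>n. a n \<le> x) sequentially" using assms(5) by (simp add: filterlim_at_bot)
    moreover have "eventually (\<lambda>n. x \<le> b n) sequentially" using assms(6) by (simp add: filterlim_at_top)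
    ultimately show "eventually (\<lambda>n. ennreal (H x * indicator {a n..b n} x) = ennreal (H x)) sequentially"
      by eventually_elim (simp add: indicator_def)
  qed
qed simp

locale perturbed_dilation =
  fixes f f' :: "real \<Rightarrow> real" and \<alpha> M p :: real
  assumes f_deriv: "\<And>t. (f has_real_derivative f' t) (at t)"
    and f'_continuous: "continuous_on UNIV f'"
    and abs_f'_less: "\<And>t. \<bar>f' t\<bar> < \<alpha>"
    and f_bounded: "\<And>t. \<bar>f t\<bar> \<le> M"
    and f_tendsto_at_top: "(f \<longlongrightarrow> 0) at_top"
    and f_tendsto_at_bot: "(f \<longlongrightarrow> 0) at_bot"
    and p_pos: "p > 0"
    and integrable_abs_powr_f: "integrable lborel (\<lambda>t. \<bar>f t\<bar> powr p)"
begin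

definition warp :: "real \<Rightarrow> real" where "warp t = \<alpha> * t + f t"

definition defect :: "real \<Rightarrow> real" where "defect u = inv warp u - u / \<alpha>"

lemma alpha_pos: "\<alpha> > 0"
  using abs_f'_less[of 0] by linarith

lemma f_continuous: "continuous_on UNIV f"
  using f_deriv by (metis DERIV_isCont continuous_at_imp_continuous_on)

lemma f_measurable [measurable]: "f \<in> borel_measurable borel"
  using f_continuous by (rule borel_measurable_continuous_onI)

lemma f'_measurable [measurable]: "f' \<in> borel_measurable borel"
  using f'_continuous by (rule borel_measurable_continuous_onI)

lemma has_real_derivative_warp: "(warp has_real_derivative \<alpha> + f' t) (at t)"
  unfolding warp_def[abs_def] by (auto intro!: derivative_eq_intros f_deriv)

lemma warp_deriv_pos: "\<alpha> + f' t > 0"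
  using abs_f'_less[of t] by linarith

lemma strict_mono_warp: "strict_mono warp"
  by (intro strict_monoI DERIV_pos_imp_increasing[of _ _ warp])
    (use has_real_derivative_warp warp_deriv_pos in blast)+

lemma warp_bounds: "\<alpha> * t - M \<le> warp t" "warp t \<le> \<alpha> * t + M"
  using f_bounded[of t] unfolding warp_def by (auto simp: abs_le_iff)

lemma surj_warp: "surj warp"
proof -
  have "\<exists>t. warp t = u" for u
  proof -
    have "warp ((u - M) / \<alpha>) \<le> u" "u \<le> warp ((u + M) / \<alpha>)"
      using warp_bounds(2)[of "(u - M) / \<alpha>"] warp_bounds(1)[of "(u + M) / \<alpha>"] alpha_pos by simp_all
    moreover have "(u - M) / \<alpha> \<le> (u + M) / \<alpha>"
      using alpha_pos f_bounded[of 0] by (simp add: divide_right_mono)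
    moreover have "\<forall>t. isCont warp t"
      using has_real_derivative_warp DERIV_isCont by blast
    ultimately show ?thesis using IVT[of warp] by blast
  qed
  then show ?thesis by (metis surjI)
qed

lemma inv_warp_warp [simp]: "inv warp (warp t) = t"
  using strict_mono_on_imp_inj_on[OF strict_mono_warp] by simp

lemma warp_inv_warp [simp]: "warp (inv warp u) = u"
  using surj_warp by (simp add: surj_f_inv_f)

lemma mono_inv_warp: "mono (inv warp)"
proof
  fix u v :: real
  assume "u \<le> v"
  then show "inv warp u \<le> inv warp v"
    using strict_mono_less_eq[OF strict_mono_warp, of "inv warp u" "inv warp v"] by simp
qed

lemma defect_warp: "defect (warp t) = - f t / \<alpha>"
proof -
  have "defect (warp t) = t - warp t / \<alpha>" unfolding defect_def by simp
  also have "\<dots> = - f t / \<alpha>" using alpha_pos by (simp add: warp_def field_simps)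
  finally show ?thesis .
qed

lemma defect_measurable [measurable]: "defect \<in> borel_measurable borel"
proof -
  have "inv warp \<in> borel_measurable borel" using mono_inv_warp by (rule borel_measurable_mono)
  then show ?thesis unfolding defect_def[abs_def] by measurable
qed

lemma warp_real_tendsto_at_top: "filterlim (\<lambda>n. warp (real n)) at_top sequentially"
proof (rule filterlim_at_top_mono[where f = "\<lambda>n. \<alpha> * real n - M"])
  show "filterlim (\<lambda>n. \<alpha> * real n - M) at_top sequentially" using alpha_pos by real_asymp
qed (simp add: warp_bounds)

lemma warp_real_tendsto_at_bot: "filterlim (\<lambda>n. warp (- real n)) at_bot sequentially"
proof (rule filterlim_at_bot_mono[where u = "\<lambda>n. - \<alpha> * real n + M"])
  show "filterlim (\<lambda>n. - \<alpha> * real n + M) at_bot sequentially" using alpha_pos by real_asymp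
  show "eventually (\<lambda>n. warp (- real n) \<le> - \<alpha> * real n + M) sequentially"
    using warp_bounds(2)[of "- real _"] by simp
qed

lemma integrable_abs_powr_f_mult_f': "integrable lborel (\<lambda>t. \<bar>f t\<bar> powr p * f' t)"
proof (rule Bochner_Integration.integrable_bound)
  show "integrable lborel (\<lambda>t. \<alpha> * \<bar>f t\<bar> powr p)" using integrable_abs_powr_f by simp
  show "AE t in lborel. norm (\<bar>f t\<bar> powr p * f' t) \<le> norm (\<alpha> * \<bar>f t\<bar> powr p)"
  proof (intro AE_I2)
    fix t
    have "\<bar>f t\<bar> powr p * \<bar>f' t\<bar> \<le> \<bar>f t\<bar> powr p * \<alpha>"
      using abs_f'_less[of t] by (intro mult_left_mono) auto
    then show "norm (\<bar>f t\<bar> powr p * f' t) \<le> norm (\<alpha> * \<bar>f t\<bar> powr p)"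
      using alpha_pos by (simp add: abs_mult mult.commute)
  qed
qed simp

text \<open>The integrand is the derivative of \<open>abs_powr_antideriv p \<circ> f\<close>, which vanishes at infinity.\<close>
lemma integral_abs_powr_f_mult_f': "(\<integral>t. \<bar>f t\<bar> powr p * f' t \<partial>lborel) = 0"
proof -
  define G where "G t = \<bar>f t\<bar> powr p * f' t" for t
  have ftc: "(\<integral>t. indicator {- real n..real n} t *\<^sub>R G t \<partial>lborel)
      = abs_powr_antideriv p (f (real n)) - abs_powr_antideriv p (f (- real n))" for n
  proof (rule integral_FTC_atLeastAtMost)
    have "continuous_on UNIV G"
      unfolding G_def using p_pos
      by (intro continuous_intros continuous_on_powr' f_continuous f'_continuous) auto
    then show "continuous_on {- real n..real n} G"
      by (rule continuous_on_subset) simp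
    fix x
    have "((\<lambda>t. abs_powr_antideriv p (f t)) has_real_derivative G x) (at x)"
      unfolding G_def by (rule DERIV_chain2[OF has_real_derivative_abs_powr_antideriv[OF p_pos] f_deriv])
    then show "((\<lambda>t. abs_powr_antideriv p (f t)) has_vector_derivative G x) (at x within {- real n..real n})"
      by (simp add: has_real_derivative_iff_has_vector_derivative has_vector_derivative_at_within)
  qed simp
  have truncated_tendsto: "(\<lambda>n. \<integral>t. indicator {- real n..real n} t *\<^sub>R G t \<partial>lborel) \<longlonglongrightarrow> (\<integral>t. G t \<partial>lborel)"
  proof (rule integral_dominated_convergence[where w = "\<lambda>t. \<bar>G t\<bar>"])
    show "integrable lborel (\<lambda>t. \<bar>G t\<bar>)" unfolding G_def using integrable_abs_powr_f_mult_f' by simp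
    show "AE t in lborel. norm (indicator {- real n..real n} t *\<^sub>R G t) \<le> \<bar>G t\<bar>" for n
      by (intro AE_I2) (auto simp: indicator_def)
    show "AE t in lborel. (\<lambda>n. indicator {- real n..real n} t *\<^sub>R G t) \<longlonglongrightarrow> G t"
    proof (intro AE_I2 tendsto_eventually)
      fix t
      obtain N :: nat where "\<bar>t\<bar> \<le> real N" using real_arch_simple by blast
      then show "eventually (\<lambda>n. indicator {- real n..real n} t *\<^sub>R G t = G t) sequentially"
        unfolding eventually_sequentially by (intro exI[of _ N]) (auto simp: indicator_def abs_le_iff)
    qed
  qed (simp_all add: G_def)
  have boundary_tendsto: "(\<lambda>n. abs_powr_antideriv p (f (real n)) - abs_powr_antideriv p (f (- real n)))
      \<longlonglongrightarrow> abs_powr_antideriv p 0 - abs_powr_antideriv p 0"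
  proof (intro tendsto_diff isCont_tendsto_compose[OF DERIV_isCont[OF has_real_derivative_abs_powr_antideriv[OF p_pos]]])
    show "(\<lambda>n. f (real n)) \<longlonglongrightarrow> 0"
      using filterlim_compose[OF f_tendsto_at_top filterlim_real_sequentially] by (simp add: comp_def)
    have "filterlim (\<lambda>n::nat. - real n) at_bot sequentially" by real_asymp
    then show "(\<lambda>n. f (- real n)) \<longlonglongrightarrow> 0"
      using filterlim_compose[OF f_tendsto_at_bot] by blast
  qed
  from LIMSEQ_unique[OF truncated_tendsto[unfolded ftc] boundary_tendsto] show ?thesis
    unfolding G_def by simp
qed


lemma nn_integral_abs_powr_defect:
  "(\<integral>\<^sup>+u. ennreal (\<bar>defect u\<bar> powr p) \<partial>lborel)
     = (\<integral>\<^sup>+t. ennreal (\<bar>f t\<bar> powr p / \<alpha> powr p * (\<alpha> + f' t)) \<partial>lborel)"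
proof -
  define F where "F u = \<bar>defect u\<bar> powr p" for u
  define G where "G t = \<bar>f t\<bar> powr p / \<alpha> powr p * (\<alpha> + f' t)" for t
  have [measurable]: "F \<in> borel_measurable borel" "G \<in> borel_measurable borel"
    unfolding F_def G_def by measurable
  have F_warp: "F (warp t) * (\<alpha> + f' t) = G t" for t
  proof -
    have "\<bar>defect (warp t)\<bar> = \<bar>f t\<bar> / \<alpha>" using alpha_pos by (simp add: defect_warp abs_divide)
    then show ?thesis unfolding F_def G_def using alpha_pos by (simp add: powr_divide)
  qed
  have substitution: "(\<integral>\<^sup>+u. ennreal (F u * indicator {warp (- real n)..warp (real n)} u) \<partial>lborel)
      = (\<integral>\<^sup>+t. ennreal (G t * indicator {- real n..real n} t) \<partial>lborel)" for n
    unfolding F_warp[symmetric]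
  proof (rule nn_integral_substitution)
    show "set_borel_measurable borel {warp (- real n)..warp (real n)} F"
      unfolding set_borel_measurable_def by measurable
    show "continuous_on {- real n..real n} (\<lambda>x. \<alpha> + f' x)"
      by (intro continuous_intros continuous_on_subset[OF f'_continuous]) auto
  qed (use has_real_derivative_warp warp_deriv_pos less_imp_le in auto)
  have "(\<lambda>n. \<integral>\<^sup>+u. ennreal (F u * indicator {warp (- real n)..warp (real n)} u) \<partial>lborel)
      \<longlonglongrightarrow> (\<integral>\<^sup>+u. ennreal (F u) \<partial>lborel)"
    using strict_mono_warp
    by (intro nn_integral_interval_tendsto warp_real_tendsto_at_bot warp_real_tendsto_at_top)
      (auto intro!: decseq_SucI incseq_SucI simp: strict_mono_less_eq F_def)
  moreover have "(\<lambda>n. \<integral>\<^sup>+t. ennreal (G t * indicator {- real n..real n} t) \<partial>lborel)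
      \<longlonglongrightarrow> (\<integral>\<^sup>+t. ennreal (G t) \<partial>lborel)"
  proof (intro nn_integral_interval_tendsto)
    show "filterlim (\<lambda>n. - real n) at_bot sequentially" "filterlim real at_top sequentially"
      by real_asymp+
  qed (auto intro!: decseq_SucI incseq_SucI simp: G_def less_imp_le[OF warp_deriv_pos])
  ultimately have "(\<integral>\<^sup>+u. ennreal (F u) \<partial>lborel) = (\<integral>\<^sup>+t. ennreal (G t) \<partial>lborel)"
    unfolding substitution by (rule LIMSEQ_unique)
  then show ?thesis unfolding F_def G_def .
qed

theorem integral_abs_powr_defect:
  "integrable lborel (\<lambda>u. \<bar>defect u\<bar> powr p)
   \<and> (\<integral>u. \<bar>defect u\<bar> powr p \<partial>lborel) = \<alpha> powr (1 - p) * (\<integral>t. \<bar>f t\<bar> powr p \<partial>lborel)"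
proof -
  define G where "G t = \<bar>f t\<bar> powr p / \<alpha> powr p * (\<alpha> + f' t)" for t
  have G_nonneg: "0 \<le> G t" for t unfolding G_def using warp_deriv_pos[of t] by simp
  have G_eq: "G t = (\<alpha> * \<bar>f t\<bar> powr p + \<bar>f t\<bar> powr p * f' t) / \<alpha> powr p" for t
    unfolding G_def by (simp add: field_simps)
  have integrable_G: "integrable lborel G"
    unfolding G_eq using integrable_abs_powr_f integrable_abs_powr_f_mult_f' by simp
  have integral_G: "(\<integral>t. G t \<partial>lborel) = \<alpha> powr (1 - p) * (\<integral>t. \<bar>f t\<bar> powr p \<partial>lborel)"
    unfolding G_eq using integrable_abs_powr_f integrable_abs_powr_f_mult_f' alpha_pos
    by (simp add: integral_abs_powr_f_mult_f' powr_diff)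
  have nn_eq: "(\<integral>\<^sup>+u. ennreal (\<bar>defect u\<bar> powr p) \<partial>lborel) = ennreal (\<integral>t. G t \<partial>lborel)"
    unfolding nn_integral_abs_powr_defect G_def[symmetric]
    using integrable_G G_nonneg by (intro nn_integral_eq_integral) auto
  have integrable: "integrable lborel (\<lambda>u. \<bar>defect u\<bar> powr p)"
    using nn_eq by (intro integrableI_nn_integral_finite[where x = "\<integral>t. G t \<partial>lborel"]) auto
  have "ennreal (\<integral>u. \<bar>defect u\<bar> powr p \<partial>lborel) = ennreal (\<integral>t. G t \<partial>lborel)"
    using nn_integral_eq_integral[OF integrable] nn_eq by simp
  then have "(\<integral>u. \<bar>defect u\<bar> powr p \<partial>lborel) = (\<integral>t. G t \<partial>lborel)"
    using G_nonneg by (subst (asm) ennreal_inj) (auto intro: integral_nonneg_AE)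
  then show ?thesis using integrable integral_G by simp
qed

end

lemma (in bandlimited_signal) perturbed_dilation_Re_fourier_derivative:
  assumes "\<sigma> * M < \<alpha>" "p > 0"
    and "(f \<longlongrightarrow> 0) at_top" "(f \<longlongrightarrow> 0) at_bot"
    and "integrable lborel (\<lambda>t. \<bar>f t\<bar> powr p)"
  shows "perturbed_dilation f (\<lambda>t. Re (fourier_derivative t)) \<alpha> M p"
proof
  show "(f has_real_derivative Re (fourier_derivative t)) (at t)" for t
    by (rule has_real_derivative_f)
  show "continuous_on UNIV (\<lambda>t. Re (fourier_derivative t))"
    unfolding continuous_on_eq_continuous_at[OF open_UNIV]
    using isCont_fourier_derivative by (auto intro!: continuous_intros)
  show "\<bar>Re (fourier_derivative t)\<bar> < \<alpha>" for t
    using abs_Re_le_cmod[of "fourier_derivative t"] norm_fourier_derivative_le[of t] assms(1) by linarith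
qed (use f_bounded assms in auto)

lemma abs_le_of_abs_le_inverse_square:
  fixes f :: "real \<Rightarrow> real"
  assumes "\<And>t. \<bar>f t\<bar> \<le> A / (1 + t\<^sup>2)" "A > 0"
  shows "\<bar>f t\<bar> \<le> A"
proof -
  have "A / (1 + t\<^sup>2) \<le> A"
    using assms(2) by (simp add: divide_le_eq add_pos_nonneg)
  then show ?thesis using assms(1)[of t] by linarith
qed

lemma integrable_of_abs_le_inverse_square:
  fixes f :: "real \<Rightarrow> real"
  assumes [measurable]: "f \<in> borel_measurable borel" and decay: "\<And>t. \<bar>f t\<bar> \<le> A / (1 + t\<^sup>2)"
  shows "integrable lborel f"
proof (rule Bochner_Integration.integrable_bound)
  show "integrable lborel (\<lambda>t. A * inverse (1 + t\<^sup>2))"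
    using integrable_inverse_1_plus_square by (simp add: einterval_eq_UNIV set_integrable_def)
  show "AE t in lborel. norm (f t) \<le> norm (A * inverse (1 + t\<^sup>2))"
    using decay by (intro AE_I2) (smt (verit) divide_inverse real_norm_def)
qed simp

lemma tendsto_0_of_abs_le_inverse_square:
  fixes f :: "real \<Rightarrow> real"
  assumes decay: "\<And>t. \<bar>f t\<bar> \<le> A / (1 + t\<^sup>2)"
  shows "(f \<longlongrightarrow> 0) at_top" "(f \<longlongrightarrow> 0) at_bot"
proof -
  have bound: "\<forall>\<^sub>F t in F. norm (f t) \<le> A / (1 + t\<^sup>2)" for F
    using decay by (intro always_eventually allI) simp
  have "((\<lambda>t. A / (1 + t\<^sup>2)) \<longlongrightarrow> 0) at_top" "((\<lambda>t. A / (1 + t\<^sup>2)) \<longlongrightarrow> 0) at_bot"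
    by real_asymp+
  then show "(f \<longlongrightarrow> 0) at_top" "(f \<longlongrightarrow> 0) at_bot"
    by (auto intro: Lim_null_comparison[OF bound])
qed

lemma integrable_abs_powr_of_bounded:
  fixes f :: "real \<Rightarrow> real"
  assumes [measurable]: "f \<in> borel_measurable borel" and "integrable lborel f"
    and bounded: "\<And>t. \<bar>f t\<bar> \<le> M" and p: "1 \<le> p"
  shows "integrable lborel (\<lambda>t. \<bar>f t\<bar> powr p)"
proof (rule Bochner_Integration.integrable_bound)
  show "integrable lborel (\<lambda>t. M powr (p - 1) * \<bar>f t\<bar>)" using assms(2) by simp
  have "\<bar>f t\<bar> powr p \<le> M powr (p - 1) * \<bar>f t\<bar>" for t
  proof (cases "f t = 0")
    case False
    then have "\<bar>f t\<bar> powr p = \<bar>f t\<bar> powr (p - 1) * \<bar>f t\<bar>" by (simp add: powr_diff)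
    also have "\<dots> \<le> M powr (p - 1) * \<bar>f t\<bar>"
      using bounded[of t] p by (intro mult_right_mono powr_mono2) auto
    finally show ?thesis .
  qed (use p in simp)
  then show "AE t in lborel. norm (\<bar>f t\<bar> powr p) \<le> norm (M powr (p - 1) * \<bar>f t\<bar>)"
    by (intro AE_I2) simp
qed simp

lemma Lp_norm_eq_of_integral_abs_powr_eq:
  assumes "p > 0" "\<alpha> > 0"
    and "(\<integral>u. \<bar>h u\<bar> powr p \<partial>lborel) = \<alpha> powr (1 - p) * (\<integral>t. \<bar>f t\<bar> powr p \<partial>lborel)"
  shows "Lp_norm p h = Lp_norm p f / \<alpha> powr (1 - 1 / p)"
proof -
  have "Lp_norm p h = \<alpha> powr ((1 - p) * (1 / p)) * Lp_norm p f"
    unfolding Lp_norm_def assms(3) using assms(2) by (simp add: powr_mult powr_powr)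
  also have "(1 - p) * (1 / p) = - (1 - 1 / p)" using assms(1) by (simp add: field_simps)
  finally show ?thesis by (simp only: powr_minus divide_inverse mult.commute)
qed

theorem mainTheorem8:
  fixes \<sigma> A \<alpha> p :: real and f g h :: "real \<Rightarrow> real"
  assumes "\<sigma> > 0" and "A > 0"
    and "continuous_on UNIV f"
    and "bandlimited \<sigma> f"
    and "\<And>t. \<bar>f t\<bar> \<le> A / (1 + t\<^sup>2)"
    and "\<alpha> > A * \<sigma>"
    and "g = (\<lambda>t. \<alpha> * t + f t)"
    and "h = (\<lambda>u. inv g u - u / \<alpha>)"
    and "1 \<le> p"
  shows "integrable lborel (\<lambda>u. \<bar>h u\<bar> powr p)
    \<and> Lp_norm p h = Lp_norm p f / \<alpha> powr (1 - 1 / p)"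
proof -
  have f_measurable [measurable]: "f \<in> borel_measurable borel"
    using assms(3) by (rule borel_measurable_continuous_onI)
  have f_bounded: "\<bar>f t\<bar> \<le> A" for t
    using abs_le_of_abs_le_inverse_square[OF assms(5,2)] .
  have f_integrable: "integrable lborel f"
    using integrable_of_abs_le_inverse_square[OF f_measurable assms(5)] .
  interpret S: bandlimited_signal f \<sigma> A
    using assms(1,3,4) f_integrable f_bounded by unfold_locales
  interpret W: perturbed_dilation f "\<lambda>t. Re (S.fourier_derivative t)" \<alpha> A p
    using assms(6,9) tendsto_0_of_abs_le_inverse_square[OF assms(5)]
      integrable_abs_powr_of_bounded[OF f_measurable f_integrable f_bounded assms(9)]
    by (intro S.perturbed_dilation_Re_fourier_derivative) (auto simp: mult.commute)
  have "g = W.warp"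
    using assms(7) by (simp add: fun_eq_iff W.warp_def)
  then have "h = W.defect"
    using assms(8) unfolding W.defect_def[abs_def] by simp
  with W.integral_abs_powr_defect show ?thesis
    using Lp_norm_eq_of_integral_abs_powr_eq[OF _ W.alpha_pos, of p h f] assms(9) by simp
qed

end
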